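(* Let $X$, $(S_n)$ be as in the context and assume there exists a quasi-stationary distribution $\nu$ with exponential absorption parameter $\theta_{0,S}$. Then $j_S(\nu)=0$ and $\nu\{x:\ j_S(x)>0\}=0$. If in addition Assumption (A) holds and $\nu\in \mathcal M_+(W_S)$, then $\nu(\eta_S)=1$ and $\nu=\sum_{i\in I_S}\nu(\eta_{S,i})\,\nu_{S,i}$.
   Context: Let $D$ be a measurable space, $\partial\notin D$, and $(X_n)_{n\in\mathbb Z_+}$ a Markov chain on $D\cup\{\partial\}$ for which $\partial$ is absorbing; $\tau_\partial=\inf\{n\ge0: X_n=\partial\}$; $\mathbb P_x,\mathbb E_x$ denote law and expectation given $X_0=x$, $\mathbb P_\mu=\int\mathbb P_x\mu(dx)$. Semigroup $S_nf(x)=\mathbb E_x(f(X_n)\mathbbm 1_{n<\tau_\partial})$, $\mu S_nf=\int S_nf\,d\mu$. Functions are extended by $0$ outside their domain. For measurable $W:D\to[1,\infty)$, $\mathcal M(W)$: finite signed measures with $|\mu|(W)<\infty$, norm $|\mu|(W)$; $\mathcal M_+(W)$ its nonnegative part; $L^\infty(W)$: measurable $f$ with $\|f\|_W=\sup|f|/W<\infty$. $\theta_S(\mu):=\inf\{\theta\ge0:\liminf_n\theta^{-n}\mu S_n\mathbbm 1_D=0\}$, $\theta_S(x)=\theta_S(\delta_x)$, $\theta_{0,S}=\sup_x\theta_S(x)$; $j_S(\mu):=\inf\{\ell\ge0:\liminf_n n^{-\ell}\theta_{0,S}^{-n}\mu S_n\mathbbm 1_D=0\}$ (with $\inf\emptyset=0$),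 $j_S(x)=j_S(\delta_x)$. A quasi-stationary distribution (QSD) is a probability measure $\nu$ on $D$ with $\mathbb P_\nu(X_n\in\cdot\mid n<\tau_\partial)=\nu$ for all $n$; its exponential absorption parameter is the $\theta\in(0,1]$ with $\mathbb P_\nu(n<\tau_\partial)=\theta^n$ for all $n$. Assumption (A): $\theta_{0,S}\in(0,1]$, $j_S$ integer valued, and there exist measurable $W_S:D\to[1,\infty)$, a finite or countable set $I_S$, probability measures $\nu_{S,i}\in\mathcal M(W_S)$, non-identically zero nonnegative $\eta_{S,i}\in L^\infty(W_S)$ ($i\in I_S$) with $\sum_i\eta_{S,i}\nu_{S,i}(W_S)\in L^\infty(W_S)$, and $\alpha_{S,n}\to0$, such that for all $f\in L^\infty(W_S)$, $n\ge1$, $x\in D$: $\big|\theta_{0,S}^{-n}n^{-j_S(x)}\mathbb E_x(f(X_n)\mathbbm 1_{n<\tau_\partial})-\sum_i\eta_{S,i}(x)\nu_{S,i}(f)\big|\le\alpha_{S,n}W_S(x)\|f\|_{W_S}$. Then $\eta_S:=\sum_i\eta_{S,i}$. *)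

theory Defs
  imports "HOL-Probability.Probability"
begin

text \<open>The Markov chain on D + {cemetery} with absorbing cemetery is encoded by its
  killed (sub-Markov) one-step kernel K on the measurable space M (space M = D):
  K x = law of X_1 restricted to D under P_x; the missing mass 1 - K x D is the
  probability of jumping to the cemetery.\<close>

fun Kn :: "'a measure \<Rightarrow> ('a \<Rightarrow> 'a measure) \<Rightarrow> nat \<Rightarrow> 'a \<Rightarrow> 'a measure" where
  "Kn M K 0 x = return M x"
| "Kn M K (Suc n) x = (Kn M K n x \<bind> K)"

text \<open>S_n f (x) = E_x (f(X_n) 1_{n < tau})\<close>
definition Sn :: "'a measure \<Rightarrow> ('a \<Rightarrow> 'a measure) \<Rightarrow> nat \<Rightarrow> ('a \<Rightarrow> real) \<Rightarrow> 'a \<Rightarrow> real" where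
  "Sn M K n f x = (\<integral>y. f y \<partial>(Kn M K n x))"

definition muSn :: "'a measure \<Rightarrow> ('a \<Rightarrow> 'a measure) \<Rightarrow> 'a measure \<Rightarrow> nat \<Rightarrow> ('a \<Rightarrow> real) \<Rightarrow> real" where
  "muSn M K \<mu> n f = (\<integral>x. Sn M K n f x \<partial>\<mu>)"

text \<open>mu S_n 1_D = P_mu(n < tau)\<close>
definition mass :: "'a measure \<Rightarrow> ('a \<Rightarrow> 'a measure) \<Rightarrow> 'a measure \<Rightarrow> nat \<Rightarrow> real" where
  "mass M K \<mu> n = muSn M K \<mu> n (\<lambda>_. 1)"

text \<open>theta^(-n) * a, with the convention 0^(-n) = infinity for n \<ge> 1 and 0 * infinity = 0.\<close>
definition scaled_term :: "real \<Rightarrow> nat \<Rightarrow> real \<Rightarrow> ereal" where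
  "scaled_term \<theta> n a = (if \<theta> > 0 then ereal (a / \<theta> ^ n)
                         else if a = 0 \<or> n = 0 then ereal a else \<infinity>)"

definition thetaS :: "'a measure \<Rightarrow> ('a \<Rightarrow> 'a measure) \<Rightarrow> 'a measure \<Rightarrow> real" where
  "thetaS M K \<mu> = Inf {\<theta>::real. \<theta> \<ge> 0 \<and> liminf (\<lambda>n. scaled_term \<theta> n (mass M K \<mu> n)) = 0}"

definition theta0S :: "'a measure \<Rightarrow> ('a \<Rightarrow> 'a measure) \<Rightarrow> real" where
  "theta0S M K = (SUP x\<in>space M. thetaS M K (return M x))"

definition jS :: "'a measure \<Rightarrow> ('a \<Rightarrow> 'a measure) \<Rightarrow> 'a measure \<Rightarrow> real" where
  "jS M K \<mu> = (let L = {l::real. l \<ge> 0 \<and>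
        liminf (\<lambda>n. ereal (real n powr (- l) * mass M K \<mu> n / theta0S M K ^ n)) = 0}
     in if L = {} then 0 else Inf L)"

definition isQSD :: "'a measure \<Rightarrow> ('a \<Rightarrow> 'a measure) \<Rightarrow> 'a measure \<Rightarrow> bool" where
  "isQSD M K \<nu> \<longleftrightarrow> prob_space \<nu> \<and> sets \<nu> = sets M \<and>
     (\<forall>n. mass M K \<nu> n > 0 \<and>
        (\<forall>A\<in>sets M. muSn M K \<nu> n (indicator A) / mass M K \<nu> n = measure \<nu> A))"

definition QSD_param :: "'a measure \<Rightarrow> ('a \<Rightarrow> 'a measure) \<Rightarrow> 'a measure \<Rightarrow> real \<Rightarrow> bool" where
  "QSD_param M K \<nu> \<theta> \<longleftrightarrow> isQSD M K \<nu> \<and> 0 < \<theta> \<and> \<theta> \<le> 1 \<and> (\<forall>n. mass M K \<nu> n = \<theta> ^ n)"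

definition LinfW :: "'a measure \<Rightarrow> ('a \<Rightarrow> real) \<Rightarrow> ('a \<Rightarrow> real) \<Rightarrow> bool" where
  "LinfW M W f \<longleftrightarrow> f \<in> borel_measurable M \<and> (\<exists>C. \<forall>x\<in>space M. \<bar>f x\<bar> \<le> C * W x)"

definition normW :: "'a measure \<Rightarrow> ('a \<Rightarrow> real) \<Rightarrow> ('a \<Rightarrow> real) \<Rightarrow> real" where
  "normW M W f = (SUP x\<in>space M. \<bar>f x\<bar> / W x)"

definition assumptionA :: "'a measure \<Rightarrow> ('a \<Rightarrow> 'a measure) \<Rightarrow> ('a \<Rightarrow> real) \<Rightarrow> 'i set \<Rightarrow>
     ('i \<Rightarrow> 'a measure) \<Rightarrow> ('i \<Rightarrow> 'a \<Rightarrow> real) \<Rightarrow> (nat \<Rightarrow> real) \<Rightarrow> bool" where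
  "assumptionA M K W I \<nu>s \<eta> \<alpha> \<longleftrightarrow>
     0 < theta0S M K \<and> theta0S M K \<le> 1 \<and>
     (\<forall>x\<in>space M. jS M K (return M x) \<in> \<int>) \<and>
     W \<in> borel_measurable M \<and> (\<forall>x\<in>space M. 1 \<le> W x) \<and>
     countable I \<and>
     (\<forall>i\<in>I. prob_space (\<nu>s i) \<and> sets (\<nu>s i) = sets M \<and> integrable (\<nu>s i) W) \<and>
     (\<forall>i\<in>I. LinfW M W (\<eta> i) \<and> (\<forall>x\<in>space M. 0 \<le> \<eta> i x) \<and> (\<exists>x\<in>space M. \<eta> i x \<noteq> 0)) \<and>
     (\<exists>C. \<forall>x\<in>space M.
         (\<Sum>\<^sub>\<infinity>i\<in>I. ennreal (\<eta> i x * (\<integral>y. W y \<partial>(\<nu>s i)))) \<le> ennreal (C * W x)) \<and>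
     \<alpha> \<longlonglongrightarrow> 0 \<and>
     (\<forall>n. \<forall>x\<in>space M. integrable (Kn M K n x) W) \<and>
     (\<forall>f. LinfW M W f \<longrightarrow> (\<forall>n\<ge>1. \<forall>x\<in>space M.
        \<bar>(1 / theta0S M K) ^ n * real n powr (- jS M K (return M x)) * Sn M K n f x
          - (\<Sum>\<^sub>\<infinity>i\<in>I. \<eta> i x * (\<integral>y. f y \<partial>(\<nu>s i)))\<bar>
        \<le> \<alpha> n * W x * normW M W f))"

end

theory Submission
  imports Defs "HOL-Real_Asymp.Real_Asymp"
begin

text \<open>Since \<open>P\<^sub>\<nu>(n < \<tau>) = \<theta>\<^sub>0\<^sup>n\<close>, the rescaled survival probabilities
  \<open>\<theta>\<^sub>0\<^sup>-\<^sup>n P\<^sub>x(n < \<tau>)\<close> have \<open>\<nu>\<close>-integral 1 for every \<open>n\<close>. By Fatou's lemma their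
  liminf is finite for \<open>\<nu>\<close>-almost every \<open>x\<close>, which rules out growth like \<open>n\<^sup>j\<close> with
  \<open>j > 0\<close>; hence \<open>j\<^sub>S(x) = 0\<close> \<open>\<nu>\<close>-a.e. For such \<open>x\<close>, Assumption (A) says that
  \<open>\<theta>\<^sub>0\<^sup>-\<^sup>n P\<^sub>x(X\<^sub>n \<in> A, n < \<tau>)\<close> converges to \<open>\<Sum>\<^sub>i \<eta>\<^sub>i(x) \<nu>\<^sub>i(A)\<close> at rate
  \<open>\<alpha>\<^sub>n W(x)\<close>. Integrating against \<open>\<nu>\<close>, where quasi-stationarity makes the
  rescaled integral equal to \<open>\<nu>(A)\<close> for every \<open>n\<close>, and letting \<open>n \<rightarrow> \<infinity>\<close> gives
  \<open>\<nu>(A) = \<integral> \<Sum>\<^sub>i \<eta>\<^sub>i \<nu>\<^sub>i(A) d\<nu>\<close>; the case \<open>A = D\<close> gives \<open>\<nu>(\<eta>\<^sub>S) = 1\<close>.\<close>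

lemma measurable_Kn:
  assumes "K \<in> M \<rightarrow>\<^sub>M subprob_algebra M"
  shows "Kn M K n \<in> M \<rightarrow>\<^sub>M subprob_algebra M"
  by (induction n) (auto intro: measurable_bind2 assms return_measurable)

lemma
  assumes "K \<in> M \<rightarrow>\<^sub>M subprob_algebra M" "x \<in> space M"
  shows subprob_space_Kn: "subprob_space (Kn M K n x)"
    and sets_Kn: "sets (Kn M K n x) = sets M"
  using measurable_space[OF measurable_Kn[OF assms(1)] assms(2), of n]
  by (auto simp: space_subprob_algebra)

lemma measurable_measure_Kn:
  assumes "K \<in> M \<rightarrow>\<^sub>M subprob_algebra M" "A \<in> sets M"
  shows "(\<lambda>x. measure (Kn M K n x) A) \<in> borel_measurable M"
  using measurable_compose[OF measurable_Kn[OF assms(1)] measurable_measure_subprob_algebra[OF assms(2)]] .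

lemma measure_Kn_le_1:
  assumes "K \<in> M \<rightarrow>\<^sub>M subprob_algebra M" "x \<in> space M"
  shows "measure (Kn M K n x) A \<le> 1"
  using subprob_space.subprob_measure_le_1[OF subprob_space_Kn[OF assms]] .

lemma integrable_measure_Kn:
  assumes kernel: "K \<in> M \<rightarrow>\<^sub>M subprob_algebra M" and "finite_measure \<mu>" "sets \<mu> = sets M"
    and "A \<in> sets M"
  shows "integrable \<mu> (\<lambda>x. measure (Kn M K n x) A)"
proof -
  interpret finite_measure \<mu> by fact
  show ?thesis
  proof (rule integrable_const_bound[where B=1])
    show "AE x in \<mu>. norm (measure (Kn M K n x) A) \<le> 1"
      using measure_Kn_le_1[OF kernel] sets_eq_imp_space_eq[OF \<open>sets \<mu> = sets M\<close>] by auto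
    show "(\<lambda>x. measure (Kn M K n x) A) \<in> borel_measurable \<mu>"
      using measurable_measure_Kn[OF kernel \<open>A \<in> sets M\<close>]
      by (simp add: measurable_cong_sets[OF \<open>sets \<mu> = sets M\<close> refl])
  qed
qed

lemma Sn_indicator:
  assumes "K \<in> M \<rightarrow>\<^sub>M subprob_algebra M" "x \<in> space M" "A \<in> sets M"
  shows "Sn M K n (indicator A) x = measure (Kn M K n x) A"
proof -
  interpret subprob_space "Kn M K n x" using subprob_space_Kn[OF assms(1,2)] .
  show ?thesis
    unfolding Sn_def using sets_Kn[OF assms(1,2)] assms(3) by (simp add: integral_indicator)
qed

lemma Sn_one:
  assumes "K \<in> M \<rightarrow>\<^sub>M subprob_algebra M" "x \<in> space M"
  shows "Sn M K n (\<lambda>_. 1) x = measure (Kn M K n x) (space M)"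
  using sets_eq_imp_space_eq[OF sets_Kn[OF assms]] by (simp add: Sn_def)

lemma muSn_indicator:
  assumes "K \<in> M \<rightarrow>\<^sub>M subprob_algebra M" "sets \<mu> = sets M" "A \<in> sets M"
  shows "muSn M K \<mu> n (indicator A) = (\<integral>x. measure (Kn M K n x) A \<partial>\<mu>)"
  unfolding muSn_def using assms Sn_indicator sets_eq_imp_space_eq[OF assms(2)]
  by (intro Bochner_Integration.integral_cong) auto

lemma mass_eq_integral_measure_Kn:
  assumes "K \<in> M \<rightarrow>\<^sub>M subprob_algebra M" "sets \<mu> = sets M"
  shows "mass M K \<mu> n = (\<integral>x. measure (Kn M K n x) (space M) \<partial>\<mu>)"
  unfolding mass_def muSn_def using assms Sn_one sets_eq_imp_space_eq[OF assms(2)]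
  by (intro Bochner_Integration.integral_cong) auto

lemma mass_return:
  assumes "K \<in> M \<rightarrow>\<^sub>M subprob_algebra M" "x \<in> space M"
  shows "mass M K (return M x) n = measure (Kn M K n x) (space M)"
  using assms measurable_measure_Kn[OF assms(1) sets.top]
  by (simp add: mass_eq_integral_measure_Kn integral_return)

lemma QSD_paramD:
  assumes "QSD_param M K \<nu> \<theta>"
  shows "prob_space \<nu>" "sets \<nu> = sets M" "0 < \<theta>" "mass M K \<nu> n = \<theta> ^ n"
    and "A \<in> sets M \<Longrightarrow> muSn M K \<nu> n (indicator A) = \<theta> ^ n * measure \<nu> A"
  using assms by (auto simp: QSD_param_def isQSD_def divide_eq_eq)

lemma jS_nonneg: "0 \<le> jS M K \<mu>"
  unfolding jS_def Let_def by (auto intro: cInf_greatest)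

lemma liminf_powr_neg:
  assumes "0 < l"
  shows "liminf (\<lambda>n. ereal (real n powr (- l))) = 0"
proof -
  have "(\<lambda>n. real n powr (- l)) \<longlonglongrightarrow> 0"
    using tendsto_neg_powr[OF _ filterlim_real_sequentially, of "- l"] assms by simp
  from lim_imp_Liminf[OF trivial_limit_sequentially tendsto_ereal[OF this]]
  show ?thesis by (simp add: zero_ereal_def)
qed

lemma liminf_powr_0: "liminf (\<lambda>n. ereal (real n powr 0)) = 1"
proof -
  have "(\<lambda>n. ereal (real n powr 0)) \<longlonglongrightarrow> 1"
    by (rule tendsto_eventually) (use eventually_gt_at_top[of "0::nat"] in eventually_elim, simp)
  then show ?thesis using lim_imp_Liminf[OF trivial_limit_sequentially] by simp
qed

lemma jS_eq_0_of_geometric_mass: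
  assumes "\<And>n. mass M K \<mu> n = theta0S M K ^ n" "0 < theta0S M K"
  shows "jS M K \<mu> = 0"
proof -
  have "real n powr (- l) * mass M K \<mu> n / theta0S M K ^ n = real n powr (- l)" for n l
    using assms by simp
  moreover have "liminf (\<lambda>n. ereal (real n powr (- l))) = 0 \<longleftrightarrow> 0 < l" if "0 \<le> l" for l :: real
    using that liminf_powr_neg[of l] liminf_powr_0 by (cases "l = 0") auto
  ultimately have "{l. 0 \<le> l \<and>
      liminf (\<lambda>n. ereal (real n powr (- l) * mass M K \<mu> n / theta0S M K ^ n)) = 0} = {0::real<..}"
    by auto
  then show ?thesis unfolding jS_def Let_def by simp
qed

lemma filterlim_at_top_of_liminf_powr_pos:
  fixes b :: "nat \<Rightarrow> real"
  assumes l: "0 < l" and b: "\<And>n. 0 \<le> b n"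
    and liminf: "liminf (\<lambda>n. ereal (real n powr (- l) * b n)) \<noteq> 0"
  shows "filterlim b at_top sequentially"
proof -
  have "0 \<le> liminf (\<lambda>n. ereal (real n powr (- l) * b n))"
    using b by (intro Liminf_bounded always_eventually) auto
  with liminf have "0 < liminf (\<lambda>n. ereal (real n powr (- l) * b n))" by simp
  then obtain c where c: "0 < ereal c" "ereal c < liminf (\<lambda>n. ereal (real n powr (- l) * b n))"
    using ereal_dense2 by blast
  have "eventually (\<lambda>n. c * real n powr l \<le> b n) sequentially"
    using less_LiminfD[OF c(2)] eventually_gt_at_top[of "0::nat"]
  proof eventually_elim
    case (elim n)
    then have "c < b n / real n powr l" by (simp add: powr_minus divide_inverse mult.commute)
    then show ?case using elim by (simp add: pos_less_divide_eq)
  qed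
  moreover have "filterlim (\<lambda>n. c * real n powr l) at_top sequentially"
    using c(1) l by simp real_asymp
  ultimately show ?thesis by (rule filterlim_at_top_mono[rotated])
qed

lemma not_jS_pos_of_liminf_finite:
  assumes \<theta>: "0 < theta0S M K" and nonneg: "\<And>n. 0 \<le> mass M K \<mu> n"
    and finite: "liminf (\<lambda>n. ennreal (mass M K \<mu> n / theta0S M K ^ n)) \<noteq> \<infinity>"
  shows "\<not> 0 < jS M K \<mu>"
proof
  assume pos: "0 < jS M K \<mu>"
  define L where "L = {l::real. 0 \<le> l \<and>
    liminf (\<lambda>n. ereal (real n powr (- l) * mass M K \<mu> n / theta0S M K ^ n)) = 0}"
  have j: "jS M K \<mu> = Inf L" and "L \<noteq> {}"
    using pos unfolding jS_def L_def[symmetric] Let_def by (auto split: if_splits)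
  define l where "l = jS M K \<mu> / 2"
  have "l \<notin> L"
  proof
    assume "l \<in> L"
    then have "Inf L \<le> l" by (intro cInf_lower) (auto simp: L_def bdd_below_def)
    with pos j show False by (simp add: l_def)
  qed
  then have "liminf (\<lambda>n. ereal (real n powr (- l) * (mass M K \<mu> n / theta0S M K ^ n))) \<noteq> 0"
    using pos by (simp add: L_def l_def)
  then have "filterlim (\<lambda>n. mass M K \<mu> n / theta0S M K ^ n) at_top sequentially"
    using pos \<theta> nonneg by (intro filterlim_at_top_of_liminf_powr_pos) (auto simp: l_def)
  then have "(\<lambda>n. ennreal (mass M K \<mu> n / theta0S M K ^ n)) \<longlonglongrightarrow> top"
    by (simp add: ennreal_tendsto_top_eq_at_top)
  from lim_imp_Liminf[OF trivial_limit_sequentially this] finite show False by simp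
qed

lemma AE_liminf_finite_of_nn_integral_le:
  assumes u: "\<And>n. u n \<in> borel_measurable M" and le: "\<And>n. integral\<^sup>N M (u n) \<le> c"
    and c: "c \<noteq> \<infinity>"
  shows "AE x in M. liminf (\<lambda>n. u n x) \<noteq> \<infinity>"
proof (rule nn_integral_PInf_AE)
  have "(\<integral>\<^sup>+x. liminf (\<lambda>n. u n x) \<partial>M) \<le> liminf (\<lambda>n. integral\<^sup>N M (u n))"
    by (rule nn_integral_liminf[OF u])
  also have "\<dots> \<le> c"
    using le by (intro order_trans[OF Liminf_le_Limsup Limsup_bounded]) auto
  finally show "(\<integral>\<^sup>+x. liminf (\<lambda>n. u n x) \<partial>M) \<noteq> \<infinity>"
    using c by (auto simp: top_unique)
qed (use u in measurable)

lemma AE_not_jS_return_pos: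
  assumes kernel: "K \<in> M \<rightarrow>\<^sub>M subprob_algebra M" and qsd: "QSD_param M K \<nu> (theta0S M K)"
  shows "AE x in \<nu>. \<not> 0 < jS M K (return M x)"
proof -
  interpret prob_space \<nu> using QSD_paramD(1)[OF qsd] .
  have sets: "sets \<nu> = sets M" and \<theta>: "0 < theta0S M K"
    using QSD_paramD[OF qsd] by auto
  have space: "space \<nu> = space M" using sets_eq_imp_space_eq[OF sets] .
  define u where "u n x = ennreal (measure (Kn M K n x) (space M) / theta0S M K ^ n)" for n x
  have u_measurable: "u n \<in> borel_measurable \<nu>" for n
    using measurable_measure_Kn[OF kernel sets.top]
    unfolding u_def measurable_cong_sets[OF sets refl] by measurable
  have "integral\<^sup>N \<nu> (u n) = 1" for n
  proof -
    have "integral\<^sup>N \<nu> (u n) = ennreal (mass M K \<nu> n / theta0S M K ^ n)"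
      unfolding u_def mass_eq_integral_measure_Kn[OF kernel sets]
      using integrable_measure_Kn[OF kernel finite_measure_axioms sets sets.top] \<theta>
      by (subst nn_integral_eq_integral) auto
    then show ?thesis using QSD_paramD(4)[OF qsd] \<theta> by simp
  qed
  then have "AE x in \<nu>. liminf (\<lambda>n. u n x) \<noteq> \<infinity>"
    by (intro AE_liminf_finite_of_nn_integral_le[OF u_measurable]) auto
  then show ?thesis
  proof (rule AE_mp[OF _ AE_I2[OF impI]])
    fix x assume "x \<in> space \<nu>" "liminf (\<lambda>n. u n x) \<noteq> \<infinity>"
    then show "\<not> 0 < jS M K (return M x)"
      using \<theta> mass_return[OF kernel]
      by (intro not_jS_pos_of_liminf_finite) (auto simp: space u_def)
  qed
qed

lemma integral_eq_of_AE_approx: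
  fixes r :: "nat \<Rightarrow> 'a \<Rightarrow> real"
  assumes r: "\<And>n. integrable M (r n)" "\<And>n. integral\<^sup>L M (r n) = c"
    and g: "integrable M g" and W: "integrable M W" and \<epsilon>: "\<epsilon> \<longlonglongrightarrow> 0"
    and approx: "eventually (\<lambda>n. AE x in M. \<bar>r n x - g x\<bar> \<le> \<epsilon> n * W x) sequentially"
  shows "integral\<^sup>L M g = c"
proof -
  have "eventually (\<lambda>n. \<bar>c - integral\<^sup>L M g\<bar> \<le> \<epsilon> n * integral\<^sup>L M W) sequentially"
    using approx
  proof eventually_elim
    case (elim n)
    have "\<bar>c - integral\<^sup>L M g\<bar> = \<bar>\<integral>x. r n x - g x \<partial>M\<bar>"
      using r g by simp
    also have "\<dots> \<le> (\<integral>x. \<bar>r n x - g x\<bar> \<partial>M)"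
      using integral_norm_bound[of M "\<lambda>x. r n x - g x"] by simp
    also have "\<dots> \<le> (\<integral>x. \<epsilon> n * W x \<partial>M)"
      using elim r g W by (intro integral_mono_AE) auto
    finally show ?case by simp
  qed
  moreover have "(\<lambda>n. \<epsilon> n * integral\<^sup>L M W) \<longlonglongrightarrow> 0"
    using tendsto_mult_left_zero[OF \<epsilon>] .
  ultimately show ?thesis
    using tendsto_le[OF trivial_limit_sequentially _ tendsto_const] by fastforce
qed

lemma infsum_ennreal_eq_suminf:
  fixes f :: "nat \<Rightarrow> ennreal"
  shows "infsum f UNIV = suminf f"
proof -
  have "f sums infsum f UNIV" by (rule has_sum_imp_sums[OF has_sum_infsum]) (simp add: nonneg_summable_on_complete)
  then show ?thesis by (simp add: sums_iff)
qed

lemma infsum_ennreal_from_nat_into: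
  fixes f :: "'i \<Rightarrow> ennreal"
  assumes "countable I" "infinite I"
  shows "infsum f I = (\<Sum>n. f (from_nat_into I n))"
  using infsum_reindex_bij_betw[OF bij_betw_from_nat_into[OF assms], of f]
  by (simp add: infsum_ennreal_eq_suminf)

lemma borel_measurable_infsum_ennreal:
  fixes h :: "'i \<Rightarrow> 'a \<Rightarrow> ennreal"
  assumes "countable I" "\<And>i. i \<in> I \<Longrightarrow> h i \<in> borel_measurable M"
  shows "(\<lambda>x. \<Sum>\<^sub>\<infinity>i\<in>I. h i x) \<in> borel_measurable M"
proof (cases "finite I")
  case False
  then have "I \<noteq> {}" by auto
  with assms(2)[OF from_nat_into] show ?thesis
    by (simp add: infsum_ennreal_from_nat_into[OF assms(1) False])
qed (use assms(2) in simp)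

lemma nn_integral_infsum:
  fixes h :: "'i \<Rightarrow> 'a \<Rightarrow> ennreal"
  assumes "countable I" "\<And>i. i \<in> I \<Longrightarrow> h i \<in> borel_measurable M"
  shows "(\<integral>\<^sup>+x. (\<Sum>\<^sub>\<infinity>i\<in>I. h i x) \<partial>M) = (\<Sum>\<^sub>\<infinity>i\<in>I. \<integral>\<^sup>+x. h i x \<partial>M)"
proof (cases "finite I")
  case False
  then have "I \<noteq> {}" by auto
  with assms(2)[OF from_nat_into] show ?thesis
    by (simp add: infsum_ennreal_from_nat_into[OF assms(1) False] nn_integral_suminf)
qed (use assms(2) in \<open>simp add: nn_integral_sum\<close>)

lemma ennreal_infsum_of_finite:
  fixes f :: "'i \<Rightarrow> real"
  assumes nonneg: "\<And>i. i \<in> I \<Longrightarrow> 0 \<le> f i" and finite: "(\<Sum>\<^sub>\<infinity>i\<in>I. ennreal (f i)) \<noteq> \<infinity>"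
  shows "ennreal (infsum f I) = (\<Sum>\<^sub>\<infinity>i\<in>I. ennreal (f i))"
proof -
  have sum_ennreal: "ennreal (sum f F) = sum (\<lambda>i. ennreal (f i)) F" if "F \<subseteq> I" for F
    using nonneg that by (intro sum_ennreal[symmetric]) auto
  have "sum f F \<le> enn2real (\<Sum>\<^sub>\<infinity>i\<in>I. ennreal (f i))" if "finite F" "F \<subseteq> I" for F
  proof -
    have "ennreal (sum f F) = (\<Sum>\<^sub>\<infinity>i\<in>F. ennreal (f i))"
      using sum_ennreal[OF \<open>F \<subseteq> I\<close>] \<open>finite F\<close> by simp
    also have "\<dots> \<le> (\<Sum>\<^sub>\<infinity>i\<in>I. ennreal (f i))"
      using that by (intro infsum_mono_neutral) (auto simp: nonneg_summable_on_complete)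
    finally have "ennreal (sum f F) \<le> (\<Sum>\<^sub>\<infinity>i\<in>I. ennreal (f i))" .
    then have "enn2real (ennreal (sum f F)) \<le> enn2real (\<Sum>\<^sub>\<infinity>i\<in>I. ennreal (f i))"
      using finite by (intro enn2real_mono) (simp_all add: less_top[symmetric])
    then show ?thesis
      using nonneg that by (simp add: sum_nonneg subset_iff)
  qed
  then have "f summable_on I"
    using nonneg by (intro nonneg_bdd_above_summable_on bdd_aboveI2) auto
  then have "ennreal (infsum f I) = (SUP F\<in>{F. finite F \<and> F \<subseteq> I}. ennreal (sum f F))"
    by (rule infsum_nonneg_is_SUPREMUM_ennreal) (use nonneg in auto)
  also have "\<dots> = (\<Sum>\<^sub>\<infinity>i\<in>I. ennreal (f i))"
    by (simp add: sum_ennreal nonneg_infsum_complete)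
  finally show ?thesis .
qed

locale assumption_A =
  fixes M :: "'a measure" and K :: "'a \<Rightarrow> 'a measure" and W :: "'a \<Rightarrow> real"
    and I :: "'i set" and \<nu>s :: "'i \<Rightarrow> 'a measure" and \<eta> :: "'i \<Rightarrow> 'a \<Rightarrow> real"
    and \<alpha> :: "nat \<Rightarrow> real"
  assumes kernel: "K \<in> M \<rightarrow>\<^sub>M subprob_algebra M"
    and assumption_A_holds: "assumptionA M K W I \<nu>s \<eta> \<alpha>"
begin

lemma
  shows countable_I: "countable I"
    and W_ge_1: "x \<in> space M \<Longrightarrow> 1 \<le> W x"
    and prob_space_\<nu>s: "i \<in> I \<Longrightarrow> prob_space (\<nu>s i)"
    and sets_\<nu>s: "i \<in> I \<Longrightarrow> sets (\<nu>s i) = sets M"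
    and integrable_\<nu>s_W: "i \<in> I \<Longrightarrow> integrable (\<nu>s i) W"
    and \<eta>_measurable: "i \<in> I \<Longrightarrow> \<eta> i \<in> borel_measurable M"
    and \<eta>_nonneg: "i \<in> I \<Longrightarrow> x \<in> space M \<Longrightarrow> 0 \<le> \<eta> i x"
    and \<alpha>_tendsto_0: "\<alpha> \<longlonglongrightarrow> 0"
  using assumption_A_holds by (auto simp: assumptionA_def LinfW_def)

lemma finite_measure_\<nu>s: "i \<in> I \<Longrightarrow> finite_measure (\<nu>s i)"
  using prob_space.finite_measure[OF prob_space_\<nu>s] .

text \<open>The limit of \<open>\<theta>\<^sub>0\<^sup>-\<^sup>n P\<^sub>x(X\<^sub>n \<in> A, n < \<tau>)\<close> given by Assumption (A) when \<open>j\<^sub>S(x) = 0\<close>.\<close>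
definition limit_kernel :: "'a \<Rightarrow> 'a set \<Rightarrow> real" where
  "limit_kernel x A = (\<Sum>\<^sub>\<infinity>i\<in>I. \<eta> i x * measure (\<nu>s i) A)"

lemma limit_kernel_nonneg: "x \<in> space M \<Longrightarrow> 0 \<le> limit_kernel x A"
  unfolding limit_kernel_def by (intro infsum_nonneg) (simp add: \<eta>_nonneg)

lemma measure_\<nu>s_le_integral_W:
  assumes "i \<in> I"
  shows "measure (\<nu>s i) A \<le> (\<integral>y. W y \<partial>\<nu>s i)"
proof -
  interpret prob_space "\<nu>s i" using prob_space_\<nu>s[OF assms] .
  have "measure (\<nu>s i) A \<le> (\<integral>y. 1 \<partial>\<nu>s i)" by (simp add: prob_le_1 prob_space)
  also have "\<dots> \<le> (\<integral>y. W y \<partial>\<nu>s i)"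
    using integrable_\<nu>s_W[OF assms] W_ge_1 sets_eq_imp_space_eq[OF sets_\<nu>s[OF assms]]
    by (intro integral_mono) auto
  finally show ?thesis .
qed

lemma limit_kernel_sum_bound:
  obtains C where "0 \<le> C"
    "\<And>x. x \<in> space M \<Longrightarrow> (\<Sum>\<^sub>\<infinity>i\<in>I. ennreal (\<eta> i x * measure (\<nu>s i) A)) \<le> ennreal (C * W x)"
proof -
  obtain C where C: "\<And>x. x \<in> space M \<Longrightarrow>
      (\<Sum>\<^sub>\<infinity>i\<in>I. ennreal (\<eta> i x * (\<integral>y. W y \<partial>\<nu>s i))) \<le> ennreal (C * W x)"
    using assumption_A_holds unfolding assumptionA_def by blast
  have "(\<Sum>\<^sub>\<infinity>i\<in>I. ennreal (\<eta> i x * measure (\<nu>s i) A)) \<le> ennreal (max 0 C * W x)"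
    if x: "x \<in> space M" for x
  proof -
    have "(\<Sum>\<^sub>\<infinity>i\<in>I. ennreal (\<eta> i x * measure (\<nu>s i) A))
        \<le> (\<Sum>\<^sub>\<infinity>i\<in>I. ennreal (\<eta> i x * (\<integral>y. W y \<partial>\<nu>s i)))"
      using measure_\<nu>s_le_integral_W \<eta>_nonneg[OF _ x]
      by (intro infsum_mono ennreal_leI mult_left_mono) (auto simp: nonneg_summable_on_complete)
    also have "\<dots> \<le> ennreal (C * W x)" by (rule C[OF x])
    also have "\<dots> \<le> ennreal (max 0 C * W x)"
      using W_ge_1[OF x] by (intro ennreal_leI mult_right_mono) auto
    finally show ?thesis .
  qed
  then show ?thesis by (intro that[of "max 0 C"]) auto
qed

lemma ennreal_limit_kernel:
  assumes "x \<in> space M"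
  shows "ennreal (limit_kernel x A) = (\<Sum>\<^sub>\<infinity>i\<in>I. ennreal (\<eta> i x * measure (\<nu>s i) A))"
proof -
  obtain C where "(\<Sum>\<^sub>\<infinity>i\<in>I. ennreal (\<eta> i x * measure (\<nu>s i) A)) \<le> ennreal (C * W x)"
    using limit_kernel_sum_bound assms by metis
  then show ?thesis
    unfolding limit_kernel_def using \<eta>_nonneg[OF _ assms]
    by (intro ennreal_infsum_of_finite) (auto simp: top_unique)
qed

lemma limit_kernel_le:
  obtains C where "\<And>x. x \<in> space M \<Longrightarrow> limit_kernel x A \<le> C * W x"
proof -
  obtain C where "0 \<le> C"
    and C: "\<And>x. x \<in> space M \<Longrightarrow> (\<Sum>\<^sub>\<infinity>i\<in>I. ennreal (\<eta> i x * measure (\<nu>s i) A)) \<le> ennreal (C * W x)"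
    using limit_kernel_sum_bound by blast
  show ?thesis
  proof (rule that)
    fix x assume x: "x \<in> space M"
    have "0 \<le> C * W x" using \<open>0 \<le> C\<close> W_ge_1[OF x] by simp
    then show "limit_kernel x A \<le> C * W x"
      using C[OF x] by (simp add: ennreal_limit_kernel[OF x, symmetric])
  qed
qed

lemma borel_measurable_limit_kernel: "(\<lambda>x. limit_kernel x A) \<in> borel_measurable M"
proof -
  have "(\<lambda>x. enn2real (\<Sum>\<^sub>\<infinity>i\<in>I. ennreal (\<eta> i x * measure (\<nu>s i) A))) \<in> borel_measurable M"
    using borel_measurable_infsum_ennreal[OF countable_I] \<eta>_measurable by measurable
  then show ?thesis
    by (rule measurable_cong[THEN iffD1, rotated])
       (simp add: ennreal_limit_kernel[symmetric] limit_kernel_nonneg)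
qed

lemma integrable_limit_kernel:
  assumes sets: "sets \<mu> = sets M" and W: "integrable \<mu> W"
  shows "integrable \<mu> (\<lambda>x. limit_kernel x A)"
proof -
  obtain C where C: "\<And>x. x \<in> space M \<Longrightarrow> limit_kernel x A \<le> C * W x"
    using limit_kernel_le by blast
  show ?thesis
  proof (rule Bochner_Integration.integrable_bound[where f="\<lambda>x. C * W x"])
    show "AE x in \<mu>. norm (limit_kernel x A) \<le> norm (C * W x)"
      using C limit_kernel_nonneg sets_eq_imp_space_eq[OF sets] by (intro AE_I2) force
    show "(\<lambda>x. limit_kernel x A) \<in> borel_measurable \<mu>"
      using borel_measurable_limit_kernel by (simp add: measurable_cong_sets[OF sets refl])
  qed (use W in simp)
qed

lemma limit_kernel_approx:
  assumes A: "A \<in> sets M" and n: "1 \<le> n" and x: "x \<in> space M" and j: "jS M K (return M x) = 0"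
  shows "\<bar>(1 / theta0S M K) ^ n * measure (Kn M K n x) A - limit_kernel x A\<bar>
    \<le> \<alpha> n * normW M W (indicator A) * W x"
proof -
  have "LinfW M W (indicator A)"
    unfolding LinfW_def using A by (auto intro!: exI[of _ 1] simp: indicator_def dest: W_ge_1)
  then have "\<bar>(1 / theta0S M K) ^ n * real n powr (- jS M K (return M x)) * Sn M K n (indicator A) x
      - (\<Sum>\<^sub>\<infinity>i\<in>I. \<eta> i x * (\<integral>y. indicator A y \<partial>\<nu>s i))\<bar> \<le> \<alpha> n * W x * normW M W (indicator A)"
    using assumption_A_holds n x unfolding assumptionA_def by blast
  moreover have "(\<Sum>\<^sub>\<infinity>i\<in>I. \<eta> i x * (\<integral>y. indicator A y \<partial>\<nu>s i)) = limit_kernel x A"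
    unfolding limit_kernel_def
  proof (intro infsum_cong)
    fix i assume i: "i \<in> I"
    have "A \<inter> space (\<nu>s i) = A"
      using sets.sets_into_space[of A "\<nu>s i"] sets_\<nu>s[OF i] A by auto
    then show "\<eta> i x * (\<integral>y. indicator A y \<partial>\<nu>s i) = \<eta> i x * measure (\<nu>s i) A"
      using sets_\<nu>s[OF i] A
      by (simp add: finite_measure.emeasure_finite[OF finite_measure_\<nu>s[OF i]])
  qed
  ultimately show ?thesis
    using n j Sn_indicator[OF kernel x A] by (simp add: mult_ac)
qed

lemma integral_limit_kernel_QSD:
  assumes qsd: "QSD_param M K \<nu> (theta0S M K)" and W: "integrable \<nu> W" and A: "A \<in> sets M"
  shows "(\<integral>x. limit_kernel x A \<partial>\<nu>) = measure \<nu> A"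
proof -
  interpret \<nu>: prob_space \<nu> using QSD_paramD(1)[OF qsd] .
  have sets: "sets \<nu> = sets M" and \<theta>: "0 < theta0S M K"
    using QSD_paramD[OF qsd] by auto
  define r where "r n x = (1 / theta0S M K) ^ n * measure (Kn M K n x) A" for n x
  show ?thesis
  proof (rule integral_eq_of_AE_approx[where r=r and \<epsilon>="\<lambda>n. \<alpha> n * normW M W (indicator A)"])
    show "integrable \<nu> (r n)" for n
      unfolding r_def using integrable_measure_Kn[OF kernel \<nu>.finite_measure_axioms sets A] by simp
    show "integral\<^sup>L \<nu> (r n) = measure \<nu> A" for n
      unfolding r_def using QSD_paramD(5)[OF qsd A, of n] \<theta>
      by (simp add: muSn_indicator[OF kernel sets A] power_one_over)
    show "eventually (\<lambda>n. AE x in \<nu>. \<bar>r n x - limit_kernel x A\<bar>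
        \<le> \<alpha> n * normW M W (indicator A) * W x) sequentially"
      using eventually_ge_at_top[of 1]
    proof eventually_elim
      case (elim n)
      show ?case
        using AE_not_jS_return_pos[OF kernel qsd]
      proof (rule AE_mp[OF _ AE_I2[OF impI]])
        fix x assume "x \<in> space \<nu>" "\<not> 0 < jS M K (return M x)"
        then show "\<bar>r n x - limit_kernel x A\<bar> \<le> \<alpha> n * normW M W (indicator A) * W x"
          unfolding r_def using elim jS_nonneg[of M K "return M x"] sets_eq_imp_space_eq[OF sets]
          by (intro limit_kernel_approx[OF A]) auto
      qed
    qed
  qed (use integrable_limit_kernel[OF sets W] W tendsto_mult_left_zero[OF \<alpha>_tendsto_0] in auto)
qed

lemma emeasure_QSD_eq_nn_integral:
  assumes qsd: "QSD_param M K \<nu> (theta0S M K)" and W: "integrable \<nu> W" and A: "A \<in> sets M"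
  shows "emeasure \<nu> A = (\<integral>\<^sup>+x. (\<Sum>\<^sub>\<infinity>i\<in>I. ennreal (\<eta> i x) * emeasure (\<nu>s i) A) \<partial>\<nu>)"
proof -
  interpret \<nu>: prob_space \<nu> using QSD_paramD(1)[OF qsd] .
  have space: "space \<nu> = space M" using sets_eq_imp_space_eq[OF QSD_paramD(2)[OF qsd]] .
  have "emeasure \<nu> A = ennreal (\<integral>x. limit_kernel x A \<partial>\<nu>)"
    by (simp add: \<nu>.emeasure_eq_measure integral_limit_kernel_QSD[OF assms])
  also have "\<dots> = (\<integral>\<^sup>+x. ennreal (limit_kernel x A) \<partial>\<nu>)"
    using integrable_limit_kernel[OF QSD_paramD(2)[OF qsd] W] limit_kernel_nonneg
    by (intro nn_integral_eq_integral[symmetric]) (auto simp: space)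
  also have "\<dots> = (\<integral>\<^sup>+x. (\<Sum>\<^sub>\<infinity>i\<in>I. ennreal (\<eta> i x) * emeasure (\<nu>s i) A) \<partial>\<nu>)"
    using \<eta>_nonneg
    by (intro nn_integral_cong)
       (auto simp: space ennreal_limit_kernel ennreal_mult
         finite_measure.emeasure_eq_measure[OF finite_measure_\<nu>s] intro!: infsum_cong)
  finally show ?thesis .
qed

lemma QSD_decomposition:
  assumes qsd: "QSD_param M K \<nu> (theta0S M K)" and W: "integrable \<nu> W" and A: "A \<in> sets M"
  shows "emeasure \<nu> A = (\<Sum>\<^sub>\<infinity>i\<in>I. (\<integral>\<^sup>+x. ennreal (\<eta> i x) \<partial>\<nu>) * emeasure (\<nu>s i) A)"
proof -
  have sets: "sets \<nu> = sets M" using QSD_paramD(2)[OF qsd] .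
  have "emeasure \<nu> A = (\<Sum>\<^sub>\<infinity>i\<in>I. \<integral>\<^sup>+x. ennreal (\<eta> i x) * emeasure (\<nu>s i) A \<partial>\<nu>)"
    unfolding emeasure_QSD_eq_nn_integral[OF assms] using \<eta>_measurable
    by (intro nn_integral_infsum[OF countable_I]) (simp add: measurable_cong_sets[OF sets refl])
  also have "\<dots> = (\<Sum>\<^sub>\<infinity>i\<in>I. (\<integral>\<^sup>+x. ennreal (\<eta> i x) \<partial>\<nu>) * emeasure (\<nu>s i) A)"
    using \<eta>_measurable
    by (intro infsum_cong nn_integral_multc) (simp add: measurable_cong_sets[OF sets refl])
  finally show ?thesis .
qed

lemma QSD_nn_integral_\<eta>:
  assumes qsd: "QSD_param M K \<nu> (theta0S M K)" and W: "integrable \<nu> W"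
  shows "(\<integral>\<^sup>+x. (\<Sum>\<^sub>\<infinity>i\<in>I. ennreal (\<eta> i x)) \<partial>\<nu>) = 1"
proof -
  have "emeasure (\<nu>s i) (space M) = 1" if "i \<in> I" for i
    using prob_space.emeasure_space_1[OF prob_space_\<nu>s[OF that]]
      sets_eq_imp_space_eq[OF sets_\<nu>s[OF that]] by simp
  then have "(\<integral>\<^sup>+x. (\<Sum>\<^sub>\<infinity>i\<in>I. ennreal (\<eta> i x)) \<partial>\<nu>) = emeasure \<nu> (space M)"
    by (simp add: emeasure_QSD_eq_nn_integral[OF qsd W sets.top] cong: infsum_cong)
  also have "\<dots> = 1"
    using prob_space.emeasure_space_1[OF QSD_paramD(1)[OF qsd]]
      sets_eq_imp_space_eq[OF QSD_paramD(2)[OF qsd]] by simp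
  finally show ?thesis .
qed

end

theorem proposition2p3:
  fixes M :: "'a measure" and K :: "'a \<Rightarrow> 'a measure" and \<nu> :: "'a measure"
    and W :: "'a \<Rightarrow> real" and I :: "'i set" and \<nu>s :: "'i \<Rightarrow> 'a measure"
    and \<eta> :: "'i \<Rightarrow> 'a \<Rightarrow> real" and \<alpha> :: "nat \<Rightarrow> real"
  assumes kernel: "K \<in> M \<rightarrow>\<^sub>M subprob_algebra M"
    and qsd: "QSD_param M K \<nu> (theta0S M K)"
  shows "jS M K \<nu> = 0 \<and> (AE x in \<nu>. \<not> 0 < jS M K (return M x)) \<and>
    (assumptionA M K W I \<nu>s \<eta> \<alpha> \<and> integrable \<nu> W \<longrightarrow>
       (\<integral>\<^sup>+ x. (\<Sum>\<^sub>\<infinity>i\<in>I. ennreal (\<eta> i x)) \<partial>\<nu>) = 1 \<and>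
       (\<forall>A\<in>sets M. emeasure \<nu> A =
          (\<Sum>\<^sub>\<infinity>i\<in>I. (\<integral>\<^sup>+ x. ennreal (\<eta> i x) \<partial>\<nu>) * emeasure (\<nu>s i) A)))"
proof -
  have "jS M K \<nu> = 0"
    using QSD_paramD(3,4)[OF qsd] by (intro jS_eq_0_of_geometric_mass)
  moreover have "AE x in \<nu>. \<not> 0 < jS M K (return M x)"
    by (rule AE_not_jS_return_pos[OF kernel qsd])
  moreover have "assumption_A M K W I \<nu>s \<eta> \<alpha>" if "assumptionA M K W I \<nu>s \<eta> \<alpha>"
    using kernel that by (simp add: assumption_A_def)
  ultimately show ?thesis
    using assumption_A.QSD_nn_integral_\<eta>[OF _ qsd] assumption_A.QSD_decomposition[OF _ qsd]
    by blast
qed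

end
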